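(* Suppose $d_i-a_i<2t_i$ for every job $i$. Then for any set $S$ of jobs there is at most one order in which all jobs of $S$ can be executed nonpreemptively, each job $i$ processed without interruption during an interval $[s_i,s_i+t_i)$ with $a_i\le s_i\le d_i-t_i$, with the intervals pairwise disjoint. In particular, the ordering of the executed jobs in any nonpreemptive schedule is uniquely determined by the set of executed jobs.
   Context: Jobs $1,\dots,n$ have nonnegative integer processing times $t_i$, arrival times $a_i$ and deadlines $d_i$; they are executed on a single processor that processes one job at a time. *)

theory Defs
  imports Complex_Main
begin

definition feasible_np ::
  "(nat \<Rightarrow> nat) \<Rightarrow> (nat \<Rightarrow> nat) \<Rightarrow> (nat \<Rightarrow> nat) \<Rightarrow> nat set \<Rightarrow> (nat \<Rightarrow> real) \<Rightarrow> bool" where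
  "feasible_np t a d S s \<longleftrightarrow>
     (\<forall>i\<in>S. real (a i) \<le> s i \<and> s i \<le> real (d i) - real (t i)) \<and>
     (\<forall>i\<in>S. \<forall>j\<in>S. i \<noteq> j \<longrightarrow>
        {s i..<s i + real (t i)} \<inter> {s j..<s j + real (t j)} = {})"

definition executable_order ::
  "(nat \<Rightarrow> nat) \<Rightarrow> (nat \<Rightarrow> nat) \<Rightarrow> (nat \<Rightarrow> nat) \<Rightarrow> nat set \<Rightarrow> nat list \<Rightarrow> bool" where
  "executable_order t a d S xs \<longleftrightarrow>
     distinct xs \<and> set xs = S \<and>
     (\<exists>s. feasible_np t a d S s \<and> sorted_wrt (\<lambda>i j. s i < s j) xs)"

end

theory Submission
  imports Defs
begin

text \<open>If job i precedes job j in one feasible schedule, i finishes before j starts, so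
  a i + t i \<le> d j - t j; if j preceded i in another, also a j + t j \<le> d i - t i. Adding
  gives (d i - a i) + (d j - a j) \<ge> 2 (t i + t j), which tight windows forbid. Hence all
  feasible schedules of S start its jobs in the same order, and a list sorted strictly by
  start times is determined by its set of elements.\<close>

lemma sorted_wrt_less_image_unique:
  fixes f :: "'a \<Rightarrow> 'b::linorder"
  assumes "sorted_wrt (\<lambda>x y. f x < f y) xs" "sorted_wrt (\<lambda>x y. f x < f y) ys"
    and "set xs = set ys"
  shows "xs = ys"
proof -
  have "sorted_wrt (<) (map f xs)" "sorted_wrt (<) (map f ys)"
    using assms(1,2) by (simp_all add: sorted_wrt_map)
  then have "map f xs = map f ys" "distinct (map f xs)"
    using assms(3) by (auto simp: strict_sorted_iff intro: sorted_distinct_set_unique)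
  then show ?thesis
    using assms(3) by (auto simp: distinct_map intro: map_inj_on)
qed

lemma feasible_np_finish_le_start:
  assumes "feasible_np t a d S s" "i \<in> S" "j \<in> S" "i \<noteq> j"
    and "s i \<le> s j" "t j > 0"
  shows "s i + real (t i) \<le> s j"
proof (rule ccontr)
  assume "\<not> ?thesis"
  then have "s j \<in> {s i..<s i + real (t i)} \<inter> {s j..<s j + real (t j)}"
    using assms(5,6) by auto
  then show False
    using assms(1-4) unfolding feasible_np_def by blast
qed

lemma feasible_np_tight_window_processing_time_pos:
  assumes "feasible_np t a d S s" "i \<in> S"
    and "real (d i) - real (a i) < 2 * real (t i)"
  shows "t i > 0"
  using assms unfolding feasible_np_def by fastforce

lemma feasible_np_tight_windows_start_order_invariant:
  assumes tight: "\<forall>i\<in>S. real (d i) - real (a i) < 2 * real (t i)"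
    and s: "feasible_np t a d S s" and s': "feasible_np t a d S s'"
    and "i \<in> S" "j \<in> S" "s i < s j"
  shows "s' i < s' j"
proof (rule ccontr)
  assume "\<not> s' i < s' j"
  have "i \<noteq> j" using \<open>s i < s j\<close> by auto
  have "t i > 0" "t j > 0"
    using feasible_np_tight_window_processing_time_pos[OF s] tight \<open>i \<in> S\<close> \<open>j \<in> S\<close>
    by auto
  have i_before_j: "s i + real (t i) \<le> s j"
    using feasible_np_finish_le_start[OF s] \<open>i \<in> S\<close> \<open>j \<in> S\<close> \<open>i \<noteq> j\<close> \<open>s i < s j\<close> \<open>t j > 0\<close>
    by auto
  have j_before_i: "s' j + real (t j) \<le> s' i"
    using feasible_np_finish_le_start[OF s'] \<open>i \<in> S\<close> \<open>j \<in> S\<close> \<open>i \<noteq> j\<close>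
      \<open>\<not> s' i < s' j\<close> \<open>t i > 0\<close>
    by auto
  have "real (a i) \<le> s i" "s j \<le> real (d j) - real (t j)"
    "real (a j) \<le> s' j" "s' i \<le> real (d i) - real (t i)"
    using s s' \<open>i \<in> S\<close> \<open>j \<in> S\<close> unfolding feasible_np_def by auto
  moreover have "real (d i) - real (a i) < 2 * real (t i)"
    "real (d j) - real (a j) < 2 * real (t j)"
    using tight \<open>i \<in> S\<close> \<open>j \<in> S\<close> by auto
  ultimately show False
    using i_before_j j_before_i by linarith
qed

theorem corollary1:
  fixes n :: nat and t a d :: "nat \<Rightarrow> nat" and S :: "nat set"
  assumes "\<forall>i\<in>{1..n}. real (d i) - real (a i) < 2 * real (t i)"
    and "S \<subseteq> {1..n}"
    and "executable_order t a d S xs"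
    and "executable_order t a d S ys"
  shows "xs = ys"
proof -
  have tight: "\<forall>i\<in>S. real (d i) - real (a i) < 2 * real (t i)"
    using assms(1,2) by blast
  obtain s where s: "feasible_np t a d S s" "sorted_wrt (\<lambda>i j. s i < s j) xs"
    and xs: "set xs = S"
    using assms(3) unfolding executable_order_def by blast
  obtain s' where s': "feasible_np t a d S s'" "sorted_wrt (\<lambda>i j. s' i < s' j) ys"
    and ys: "set ys = S"
    using assms(4) unfolding executable_order_def by blast
  have "sorted_wrt (\<lambda>i j. s' i < s' j) xs"
    using feasible_np_tight_windows_start_order_invariant[OF tight s(1) s'(1)] xs
    by (intro sorted_wrt_mono_rel[OF _ s(2)]) auto
  from this s'(2) show ?thesis
    by (rule sorted_wrt_less_image_unique) (simp add: xs ys)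
qed

end
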